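(* Let $m\geq 2$ and $G=T^+_{m,2}$ with root $r$ and stem $r'$. If $S$ is a Type II set for $G$, then $N_G[r]\setminus\mathcal{P}^\infty(S)=\{r',r\}$.
   Context: Power domination: for a graph $G=(V,E)$ and $S\subseteq V$, $\mathcal{P}^0(S)=N[S]$ and for $k\ge1$, $\mathcal{P}^k(S)=\mathcal{P}^{k-1}(S)\cup N^*(\mathcal{P}^{k-1}(S))$, where $x\in N^*(A)$ iff some $a\in A$ has $x$ as its only neighbor not in $A$; $\mathcal{P}^\infty(S)$ is the stable value (the set of observed vertices), and $S$ is a power dominating set if $\mathcal{P}^\infty(S)=V$. $T_{m,h}$ is the complete $m$-ary tree of height $h$ rooted at $r$; $T^+_{m,h}$ is $T_{m,h}$ plus a new vertex $r'$ (stem) joined to $r$. For $G=T^+_{m,h}$, a set $S\subseteq V(G)\setminus\{r'\}$ is Type I if it is a power dominating set for $G$; Type II if it is not but $S\cup\{r'\}$ is; Type 0 otherwise. *)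

theory Defs
  imports Main
begin

(* A simple graph is given by a vertex set V and a symmetric irreflexive
   adjacency relation E. *)

definition closed_nbhd :: "'a set \<Rightarrow> ('a \<Rightarrow> 'a \<Rightarrow> bool) \<Rightarrow> 'a set \<Rightarrow> 'a set" where
  "closed_nbhd V E S = S \<union> {v \<in> V. \<exists>s\<in>S. E s v}"

definition nstar :: "'a set \<Rightarrow> ('a \<Rightarrow> 'a \<Rightarrow> bool) \<Rightarrow> 'a set \<Rightarrow> 'a set" where
  "nstar V E A = {x \<in> V. x \<notin> A \<and> (\<exists>a\<in>A. E a x \<and> (\<forall>y\<in>V. E a y \<and> y \<notin> A \<longrightarrow> y = x))}"

fun pd_obs :: "'a set \<Rightarrow> ('a \<Rightarrow> 'a \<Rightarrow> bool) \<Rightarrow> 'a set \<Rightarrow> nat \<Rightarrow> 'a set" where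
  "pd_obs V E S 0 = closed_nbhd V E S"
| "pd_obs V E S (Suc k) = pd_obs V E S k \<union> nstar V E (pd_obs V E S k)"

definition pd_obs_inf :: "'a set \<Rightarrow> ('a \<Rightarrow> 'a \<Rightarrow> bool) \<Rightarrow> 'a set \<Rightarrow> 'a set" where
  "pd_obs_inf V E S = (\<Union>k. pd_obs V E S k)"

definition power_dominating :: "'a set \<Rightarrow> ('a \<Rightarrow> 'a \<Rightarrow> bool) \<Rightarrow> 'a set \<Rightarrow> bool" where
  "power_dominating V E S \<longleftrightarrow> S \<subseteq> V \<and> pd_obs_inf V E S = V"

(* Complete m-ary tree T_{m,h}: vertices are words over {0..<m} of length \<le> h,
   the root is [], and the children of xs are i # xs for i < m. *)
definition tree_V :: "nat \<Rightarrow> nat \<Rightarrow> nat list set" where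
  "tree_V m h = {xs. length xs \<le> h \<and> set xs \<subseteq> {..<m}}"

definition tree_E :: "nat list \<Rightarrow> nat list \<Rightarrow> bool" where
  "tree_E xs ys \<longleftrightarrow> (\<exists>i. ys = i # xs) \<or> (\<exists>i. xs = i # ys)"

(* T^+_{m,h}: vertex None is the stem r', Some xs the tree vertex xs;
   the root r is Some []. *)
definition tplus_V :: "nat \<Rightarrow> nat \<Rightarrow> nat list option set" where
  "tplus_V m h = insert None (Some ` tree_V m h)"

fun tplus_E :: "nat list option \<Rightarrow> nat list option \<Rightarrow> bool" where
  "tplus_E (Some xs) (Some ys) = tree_E xs ys"
| "tplus_E None (Some ys) = (ys = [])"
| "tplus_E (Some xs) None = (xs = [])"
| "tplus_E None None = False"

abbreviation stem :: "nat list option" where "stem \<equiv> None"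
abbreviation root :: "nat list option" where "root \<equiv> Some []"

definition typeII :: "nat \<Rightarrow> nat \<Rightarrow> nat list option set \<Rightarrow> bool" where
  "typeII m h S \<longleftrightarrow> S \<subseteq> tplus_V m h - {stem}
     \<and> \<not> power_dominating (tplus_V m h) tplus_E S
     \<and> power_dominating (tplus_V m h) tplus_E (insert stem S)"

end

theory Submission
  imports Defs
begin

text \<open>
  Write \<open>P\<close> for the set observed by a Type II set \<open>S\<close>. As \<open>S \<union> {r'}\<close> power dominates,
  every set that contains \<open>N[S] \<union> {r', r}\<close> and is closed under forcing is all of \<open>V\<close>;
  \<open>P\<close> itself is closed under forcing but is not \<open>V\<close>. Hence \<open>r' \<notin> P\<close>, since otherwise
  \<open>r'\<close> would force \<open>r\<close>. Every child \<open>c\<close> of \<open>r\<close> lies in \<open>P\<close>: otherwise no leaf below \<open>c\<close>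
  is observed, and removing these \<open>m \<ge> 2\<close> leaves from \<open>V\<close> yields a forcing-closed set,
  because \<open>c\<close> keeps at least two unobserved children. Finally \<open>r \<notin> P\<close>, for otherwise \<open>r\<close> would force
  its only unobserved neighbour \<open>r'\<close>.
\<close>

lemma pd_obs_subset: "S \<subseteq> V \<Longrightarrow> pd_obs V E S k \<subseteq> V"
  by (induction k) (auto simp: closed_nbhd_def nstar_def)

lemma mono_pd_obs: "mono (pd_obs V E S)"
  unfolding mono_iff_le_Suc by auto

lemma pd_obs_inf_subset: "S \<subseteq> V \<Longrightarrow> pd_obs_inf V E S \<subseteq> V"
  by (auto simp: pd_obs_inf_def dest: pd_obs_subset)

lemma closed_nbhd_subset_pd_obs_inf: "closed_nbhd V E S \<subseteq> pd_obs_inf V E S"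
  unfolding pd_obs_inf_def by (metis UN_upper UNIV_I pd_obs.simps(1))

lemma nstar_subset_Un_nstar: "B \<subseteq> A \<Longrightarrow> nstar V E B \<subseteq> A \<union> nstar V E A"
  unfolding nstar_def by blast

lemma pd_obs_inf_least:
  assumes "closed_nbhd V E S \<subseteq> A" and "nstar V E A \<subseteq> A"
  shows "pd_obs_inf V E S \<subseteq> A"
proof -
  have "pd_obs V E S k \<subseteq> A" for k
  proof (induction k)
    case (Suc k)
    then show ?case using nstar_subset_Un_nstar[OF Suc.IH, of V E] assms(2) by auto
  qed (use assms(1) in simp)
  then show ?thesis by (auto simp: pd_obs_inf_def)
qed

lemma pd_obs_inf_eq_pd_obs:
  assumes "finite V" and "S \<subseteq> V"
  obtains k where "pd_obs_inf V E S = pd_obs V E S k"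
proof -
  have "pd_obs V E S i \<subseteq> pd_obs V E S j \<or> pd_obs V E S j \<subseteq> pd_obs V E S i" for i j
    by (cases "i \<le> j") (simp_all add: monoD[OF mono_pd_obs])
  then have "subset.chain UNIV (range (pd_obs V E S))"
    by (auto simp: subset_chain_def)
  moreover have "finite (range (pd_obs V E S))"
    by (rule finite_subset[of _ "Pow V"]) (use pd_obs_subset[OF assms(2)] assms(1) in auto)
  ultimately have "\<Union>(range (pd_obs V E S)) \<in> range (pd_obs V E S)"
    by (intro Union_in_chain) auto
  then show thesis using that by (auto simp: pd_obs_inf_def)
qed

lemma nstar_pd_obs_inf_subset:
  assumes "finite V" and "S \<subseteq> V"
  shows "nstar V E (pd_obs_inf V E S) \<subseteq> pd_obs_inf V E S"
proof -
  obtain k where k: "pd_obs_inf V E S = pd_obs V E S k"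
    using pd_obs_inf_eq_pd_obs[OF assms] .
  have "nstar V E (pd_obs V E S k) \<subseteq> pd_obs V E S (Suc k)" by simp
  also have "\<dots> \<subseteq> pd_obs_inf V E S" unfolding pd_obs_inf_def by blast
  finally show ?thesis using k by simp
qed

lemma pd_obs_inf_observed_by:
  assumes "x \<in> pd_obs_inf V E S"
  shows "x \<in> S \<or> (\<exists>a\<in>pd_obs_inf V E S. E a x)"
proof -
  have "x \<in> S \<or> (\<exists>a\<in>pd_obs V E S k. E a x)" if "x \<in> pd_obs V E S k" for k
    using that
  proof (induction k)
    case (Suc k)
    then show ?case using mono_pd_obs[of V E S] by (auto simp: nstar_def mono_def)
  qed (auto simp: closed_nbhd_def)
  with assms show ?thesis by (auto simp: pd_obs_inf_def)
qed

lemma Some_in_tplus_V [simp]: "Some xs \<in> tplus_V m h \<longleftrightarrow> length xs \<le> h \<and> set xs \<subseteq> {..<m}"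
  by (auto simp: tplus_V_def tree_V_def)

lemma stem_in_tplus_V [simp]: "stem \<in> tplus_V m h"
  by (simp add: tplus_V_def)

lemma finite_tplus_V: "finite (tplus_V m h)"
proof -
  have "tree_V m h = {xs. set xs \<subseteq> {..<m} \<and> length xs \<le> h}"
    by (auto simp: tree_V_def)
  then show ?thesis
    using finite_lists_length_le[of "{..<m}" h] by (simp add: tplus_V_def)
qed

lemma tplus_E_stem_iff [simp]: "tplus_E stem y \<longleftrightarrow> y = root"
  by (cases y) auto

lemma tplus_E_root_iff: "tplus_E root y \<longleftrightarrow> y = stem \<or> (\<exists>i. y = Some [i])"
  by (cases y) (auto simp: tree_E_def)

lemma tplus_E_depth2_parent:
  assumes "a \<in> tplus_V m 2" and "tplus_E a (Some [j, i])"
  shows "a = Some [i]"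
  using assms by (cases a) (auto simp: tree_E_def)

lemma closed_nbhd_insert_stem:
  "closed_nbhd (tplus_V m h) tplus_E (insert stem S) = {stem, root} \<union> closed_nbhd (tplus_V m h) tplus_E S"
  by (auto simp: closed_nbhd_def)

lemma closed_nbhd_root:
  assumes "h \<ge> 1"
  shows "closed_nbhd (tplus_V m h) tplus_E {root} = {stem, root} \<union> {Some [i] |i. i < m}"
  using assms by (auto simp: closed_nbhd_def tplus_E_root_iff)

lemma typeII_forcing_closed_superset:
  assumes "typeII m h S"
    and "{stem, root} \<union> closed_nbhd (tplus_V m h) tplus_E S \<subseteq> A"
    and "nstar (tplus_V m h) tplus_E A \<subseteq> A"
  shows "tplus_V m h \<subseteq> A"
proof -
  have "closed_nbhd (tplus_V m h) tplus_E (insert stem S) \<subseteq> A"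
    using assms(2) by (simp only: closed_nbhd_insert_stem)
  then have "pd_obs_inf (tplus_V m h) tplus_E (insert stem S) \<subseteq> A"
    using assms(3) by (rule pd_obs_inf_least)
  with assms(1) show ?thesis by (simp add: typeII_def power_dominating_def)
qed

lemma typeII_stem_unobserved:
  assumes "typeII m h S"
  shows "stem \<notin> pd_obs_inf (tplus_V m h) tplus_E S"
proof
  let ?V = "tplus_V m h" and ?P = "pd_obs_inf (tplus_V m h) tplus_E S"
  assume stem: "stem \<in> ?P"
  have SV: "S \<subseteq> ?V" using assms by (auto simp: typeII_def)
  have closed: "nstar ?V tplus_E ?P \<subseteq> ?P"
    using nstar_pd_obs_inf_subset[OF finite_tplus_V SV] .
  have "root \<in> ?P"
  proof (rule ccontr)
    assume "root \<notin> ?P"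
    with stem have "root \<in> nstar ?V tplus_E ?P" by (auto simp: nstar_def intro!: bexI[of _ stem])
    with closed \<open>root \<notin> ?P\<close> show False by blast
  qed
  then have "?V \<subseteq> ?P"
    using stem closed_nbhd_subset_pd_obs_inf[of ?V tplus_E S]
    by (intro typeII_forcing_closed_superset[OF assms _ closed]) auto
  with assms pd_obs_inf_subset[OF SV] show False
    by (auto simp: typeII_def power_dominating_def)
qed

lemma typeII_children_observed:
  assumes "m \<ge> 2" and "typeII m 2 S" and "i < m"
  shows "Some [i] \<in> pd_obs_inf (tplus_V m 2) tplus_E S"
proof (rule ccontr)
  let ?V = "tplus_V m 2" and ?P = "pd_obs_inf (tplus_V m 2) tplus_E S"
  let ?A = "?V - {Some [j, i] |j. True}"
  assume parent: "Some [i] \<notin> ?P"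
  have SV: "S \<subseteq> ?V" using assms(2) by (auto simp: typeII_def)
  have leaf: "Some [j, i] \<notin> ?P" for j
  proof
    assume "Some [j, i] \<in> ?P"
    then consider "Some [j, i] \<in> S" | a where "a \<in> ?P" and "tplus_E a (Some [j, i])"
      by (auto dest: pd_obs_inf_observed_by)
    then show False
    proof cases
      case 1
      with SV assms(3) have "Some [i] \<in> closed_nbhd ?V tplus_E S"
        by (auto simp: closed_nbhd_def tree_E_def intro!: bexI[of _ "Some [j, i]"])
      with parent closed_nbhd_subset_pd_obs_inf[of ?V tplus_E S] show False by blast
    next
      case 2
      with pd_obs_inf_subset[OF SV] have "a = Some [i]"
        using tplus_E_depth2_parent by blast
      with \<open>a \<in> ?P\<close> parent show False by simp
    qed
  qed
  have "{stem, root} \<union> closed_nbhd ?V tplus_E S \<subseteq> ?A"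
    using closed_nbhd_subset_pd_obs_inf[of ?V tplus_E S] pd_obs_inf_subset[OF SV] leaf by auto
  moreover have "nstar ?V tplus_E ?A \<subseteq> ?A"
  proof
    fix x assume x: "x \<in> nstar ?V tplus_E ?A"
    then obtain a where "a \<in> ?A" "tplus_E a x"
      and unique: "\<forall>y\<in>?V. tplus_E a y \<and> y \<notin> ?A \<longrightarrow> y = x"
      by (auto simp: nstar_def)
    show "x \<in> ?A"
    proof (rule ccontr)
      assume "x \<notin> ?A"
      with x obtain j where "x = Some [j, i]" by (auto simp: nstar_def)
      with \<open>a \<in> ?A\<close> \<open>tplus_E a x\<close> have "a = Some [i]"
        using tplus_E_depth2_parent by blast
      with unique assms(1,3) have "Some [0, i] = x" and "Some [1, i] = x"
        by (auto simp: tree_E_def)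
      then show False by auto
    qed
  qed
  ultimately have "?V \<subseteq> ?A" by (rule typeII_forcing_closed_superset[OF assms(2)])
  moreover have "Some [0, i] \<in> ?V" using assms(1,3) by simp
  ultimately show False by blast
qed

lemma typeII_root_unobserved:
  assumes "typeII m h S" and "\<And>i. i < m \<Longrightarrow> Some [i] \<in> pd_obs_inf (tplus_V m h) tplus_E S"
  shows "root \<notin> pd_obs_inf (tplus_V m h) tplus_E S"
proof
  let ?V = "tplus_V m h" and ?P = "pd_obs_inf (tplus_V m h) tplus_E S"
  assume "root \<in> ?P"
  have stem: "stem \<notin> ?P" using typeII_stem_unobserved[OF assms(1)] .
  with \<open>root \<in> ?P\<close> assms(2) have "stem \<in> nstar ?V tplus_E ?P"
    by (auto simp: nstar_def tplus_E_root_iff intro!: bexI[of _ root])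
  moreover have "S \<subseteq> ?V" using assms(1) by (auto simp: typeII_def)
  ultimately show False
    using nstar_pd_obs_inf_subset[OF finite_tplus_V] stem by blast
qed

theorem mainTheorem7:
  fixes m :: nat and S :: "nat list option set"
  assumes "m \<ge> 2"
    and "typeII m 2 S"
  shows "closed_nbhd (tplus_V m 2) tplus_E {root} - pd_obs_inf (tplus_V m 2) tplus_E S = {stem, root}"
proof -
  have children: "Some [i] \<in> pd_obs_inf (tplus_V m 2) tplus_E S" if "i < m" for i
    using typeII_children_observed[OF assms that] .
  show ?thesis
    using typeII_stem_unobserved[OF assms(2)] typeII_root_unobserved[OF assms(2) children] children
    by (auto simp: closed_nbhd_root)
qed

end
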